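(* Fix known constants $\sigma_f^2>0$, $\sigma_a^2\ge 0$ and $\alpha$ with $|\alpha|\le\sigma_f$, and consider the family of distributions indexed by the unknown parameter $\mu\in\mathbb{R}$ in which $(f(z),g(z))$ is jointly Gaussian with means $(\mu,0)$, variances $(\sigma_f^2,1)$ and covariance $\alpha$, and $Y(z)-f(z)\sim\mathcal{N}(0,\sigma_a^2)$ independent of $(f(z),g(z))$. Let $(y^{(i)},g(z^{(i)}))$, $i=1,\dots,n$, be i.i.d. observations of $(Y(z),g(z))$ from this model. Then $$\hat\mu_{\mathrm{cv}}=\frac{1}{n}\sum_{i=1}^n\bigl(y^{(i)}-\alpha\, g(z^{(i)})\bigr)$$ is the minimum variance unbiased estimator of $\mu$ (among all unbiased estimators of $\mu$ that are functions of $(y^{(i)},g(z^{(i)}))_{i=1}^n$).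
   Context: Here $z$ is a random input, $f(z)$ denotes the mean human judgment, $g(z)$ an automatic metric, and $Y(z)$ a noisy human judgment; only $\mu$ is an unknown parameter, all other quantities in the model being known constants. *)

theory Defs
  imports "HOL-Probability.Probability"
begin

definition std_normal :: "real measure" where
  "std_normal = density lborel std_normal_density"

text \<open>Law of one observation (Y(z), g(z)) in the model with parameter mu.
  Constructed from three independent standard normals Z1, Z2, Z3:
  g = Z1, f = mu + alpha Z1 + sqrt(sf^2 - alpha^2) Z2 (so (f,g) is jointly Gaussian
  with means (mu,0), variances (sf^2,1), covariance alpha), and Y = f + sa Z3
  with Y - f ~ N(0, sa^2) independent of (f,g).\<close>
definition obs_law :: "real \<Rightarrow> real \<Rightarrow> real \<Rightarrow> real \<Rightarrow> (real \<times> real) measure" where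
  "obs_law sf sa \<alpha> \<mu> =
     distr ((std_normal \<Otimes>\<^sub>M std_normal) \<Otimes>\<^sub>M std_normal) borel
       (\<lambda>((z1, z2), z3). (\<mu> + \<alpha> * z1 + sqrt (sf\<^sup>2 - \<alpha>\<^sup>2) * z2 + sa * z3, z1))"

definition sample_law :: "nat \<Rightarrow> real \<Rightarrow> real \<Rightarrow> real \<Rightarrow> real \<Rightarrow> (nat \<Rightarrow> real \<times> real) measure" where
  "sample_law n sf sa \<alpha> \<mu> = PiM {..<n} (\<lambda>_. obs_law sf sa \<alpha> \<mu>)"

definition mu_cv :: "nat \<Rightarrow> real \<Rightarrow> (nat \<Rightarrow> real \<times> real) \<Rightarrow> real" where
  "mu_cv n \<alpha> x = (\<Sum>i<n. fst (x i) - \<alpha> * snd (x i)) / real n"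

definition unbiased :: "nat \<Rightarrow> real \<Rightarrow> real \<Rightarrow> real \<Rightarrow> ((nat \<Rightarrow> real \<times> real) \<Rightarrow> real) \<Rightarrow> bool" where
  "unbiased n sf sa \<alpha> T \<longleftrightarrow>
     T \<in> borel_measurable (PiM {..<n} (\<lambda>_. (borel :: (real \<times> real) measure))) \<and>
     (\<forall>\<mu>. integrable (sample_law n sf sa \<alpha> \<mu>) T \<and>
          (\<integral>x. T x \<partial>sample_law n sf sa \<alpha> \<mu>) = \<mu>)"

text \<open>Variance of an unbiased estimator (possibly infinite), i.e. E[(T - mu)^2].\<close>
definition mse :: "nat \<Rightarrow> real \<Rightarrow> real \<Rightarrow> real \<Rightarrow> real \<Rightarrow> ((nat \<Rightarrow> real \<times> real) \<Rightarrow> real) \<Rightarrow> ennreal" where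
  "mse n sf sa \<alpha> \<mu> T = (\<integral>\<^sup>+x. ennreal ((T x - \<mu>)\<^sup>2) \<partial>sample_law n sf sa \<alpha> \<mu>)"

end

theory Submission
  imports Defs "HOL-Real_Asymp.Real_Asymp"
begin

(* In the residual W = Y - alpha g the model is a Gaussian location family: W - mu is centred
   normal with variance v = sf^2 - alpha^2 + sa^2, and moving mu to mu + Delta multiplies the
   law of an observation by exp (Delta (W - mu) / v - Delta^2 / (2 v)).  For n observations the
   likelihood ratio L has E L^2 = exp (n Delta^2 / v), so the Hammersley-Chapman-Robbins
   inequality bounds the variance of every unbiased estimator below by
   Delta^2 / (exp (n Delta^2 / v) - 1).  As Delta -> 0 this tends to v / n, the variance of
   mu_cv. *)

section \<open>Product measures and densities\<close>

lemma has_bochner_integral_pair_measure_mult: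
  fixes f g :: "_ \<Rightarrow> real"
  assumes "prob_space M" "prob_space N" and f: "integrable M f" and g: "integrable N g"
  shows "has_bochner_integral (M \<Otimes>\<^sub>M N) (\<lambda>z. f (fst z) * g (snd z))
           ((\<integral>x. f x \<partial>M) * (\<integral>y. g y \<partial>N))"
proof -
  interpret pair_prob_space M N
    using assms by (simp add: pair_prob_space_def pair_sigma_finite_def prob_space_imp_sigma_finite)
  have [measurable]: "f \<in> borel_measurable M" "g \<in> borel_measurable N"
    using f g by auto
  have "(\<integral>\<^sup>+z. ennreal (norm (f (fst z) * g (snd z))) \<partial>(M \<Otimes>\<^sub>M N))
      = (\<integral>\<^sup>+x. ennreal (norm (f x)) \<partial>M) * (\<integral>\<^sup>+y. ennreal (norm (g y)) \<partial>N)"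
    by (subst M2.nn_integral_fst[symmetric])
       (simp_all add: abs_mult ennreal_mult nn_integral_cmult nn_integral_multc)
  also have "\<dots> < \<infinity>"
    using f g by (simp add: integrable_iff_bounded ennreal_mult_less_top)
  finally have int: "integrable (M \<Otimes>\<^sub>M N) (\<lambda>z. f (fst z) * g (snd z))"
    by (intro integrableI_bounded) measurable
  then show ?thesis
    using integral_fst'[OF int, symmetric] by (simp add: has_bochner_integral_iff)
qed

lemma distr_pair_measure_eq_density:
  assumes "prob_space M" "prob_space N"
    and [measurable]: "f \<in> measurable M M" "g \<in> measurable N N"
      "h \<in> borel_measurable M" "k \<in> borel_measurable N"
    and f: "distr M M f = density M h" and g: "distr N N g = density N k"
  shows "distr (M \<Otimes>\<^sub>M N) (M \<Otimes>\<^sub>M N) (\<lambda>(x, y). (f x, g y)) = density (M \<Otimes>\<^sub>M N) (\<lambda>(x, y). h x * k y)"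
proof -
  have "prob_space (density N k)"
    unfolding g[symmetric] by (rule prob_space.prob_space_distr) fact+
  then have sigma_finite: "sigma_finite_measure (density N k)" "sigma_finite_measure N"
    using assms(2) by (simp_all add: prob_space_imp_sigma_finite)
  have "distr (M \<Otimes>\<^sub>M N) (M \<Otimes>\<^sub>M N) (\<lambda>(x, y). (f x, g y)) = distr M M f \<Otimes>\<^sub>M distr N N g"
    by (rule pair_measure_distr[symmetric]) (simp_all add: g sigma_finite)
  also have "\<dots> = density M h \<Otimes>\<^sub>M density N k"
    by (simp only: f g)
  also have "\<dots> = density (M \<Otimes>\<^sub>M N) (\<lambda>(x, y). h x * k y)"
    by (rule pair_measure_density) (simp_all add: sigma_finite)
  finally show ?thesis .
qed

lemma PiM_density:
  assumes "finite I" and M: "\<And>i. prob_space (M i)"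
    and [measurable]: "\<And>i. h i \<in> borel_measurable (M i)"
    and D: "\<And>i. prob_space (density (M i) (h i))"
  shows "PiM I (\<lambda>i. density (M i) (h i)) = density (PiM I M) (\<lambda>x. \<Prod>i\<in>I. h i (x i))"
proof -
  interpret D: product_prob_space "\<lambda>i. density (M i) (h i)" I
    using product_prob_spaceI[of "\<lambda>i. density (M i) (h i)"] D by simp
  interpret M: product_prob_space M I
    using product_prob_spaceI[of M] M by simp
  show ?thesis
  proof (rule D.PiM_eqI[symmetric])
    show "sets (density (PiM I M) (\<lambda>x. \<Prod>i\<in>I. h i (x i))) = sets (PiM I (\<lambda>i. density (M i) (h i)))"
      by (simp cong: sets_PiM_cong)
  next
    fix A assume "\<And>i. i \<in> I \<Longrightarrow> A i \<in> sets (density (M i) (h i))"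
    then have A: "\<And>i. i \<in> I \<Longrightarrow> A i \<in> sets (M i)" by simp
    have indicator: "indicator (Pi\<^sub>E I A) x = (\<Prod>i\<in>I. indicator (A i) (x i) :: ennreal)"
      if "x \<in> space (PiM I M)" for x
      using that \<open>finite I\<close> by (auto simp: indicator_def space_PiM PiE_iff prod_zero)
    have "emeasure (density (PiM I M) (\<lambda>x. \<Prod>i\<in>I. h i (x i))) (Pi\<^sub>E I A)
        = (\<integral>\<^sup>+x. (\<Prod>i\<in>I. h i (x i) * indicator (A i) (x i)) \<partial>PiM I M)"
      using A \<open>finite I\<close> by (auto simp: emeasure_density sets_PiM_I_finite indicator prod.distrib
          intro!: nn_integral_cong)
    also have "\<dots> = (\<Prod>i\<in>I. \<integral>\<^sup>+y. h i y * indicator (A i) y \<partial>M i)"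
      using A by (intro M.product_nn_integral_prod \<open>finite I\<close>) auto
    also have "\<dots> = (\<Prod>i\<in>I. emeasure (density (M i) (h i)) (A i))"
      using A by (intro prod.cong refl) (simp add: emeasure_density)
    finally show "emeasure (density (PiM I M) (\<lambda>x. \<Prod>i\<in>I. h i (x i))) (Pi\<^sub>E I A)
        = (\<Prod>i\<in>I. emeasure (density (M i) (h i)) (A i))" .
  qed fact
qed

lemma has_bochner_integral_PiM_component:
  fixes f :: "'a \<Rightarrow> real"
  assumes "prob_space M" "i \<in> I" and f: "has_bochner_integral M f c"
  shows "has_bochner_integral (PiM I (\<lambda>_. M)) (\<lambda>x. f (x i)) c"
proof -
  interpret product_prob_space "\<lambda>_. M" I
    using product_prob_spaceI[of "\<lambda>_. M"] assms(1) by simp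
  have [measurable]: "f \<in> borel_measurable M" and component: "(\<lambda>x. x i) \<in> PiM I (\<lambda>_. M) \<rightarrow>\<^sub>M M"
    using f \<open>i \<in> I\<close> by (auto simp: has_bochner_integral_iff)
  show ?thesis
    using f PiM_component[OF \<open>i \<in> I\<close>]
    by (simp add: has_bochner_integral_iff integrable_distr_eq[OF component, symmetric]
        integral_distr[OF component, symmetric])
qed

lemma has_bochner_integral_PiM_sum_square:
  fixes f :: "'a \<Rightarrow> real" and c :: real
  assumes "prob_space M" "finite I"
    and f: "has_bochner_integral M f 0" and f2: "has_bochner_integral M (\<lambda>x. (f x)\<^sup>2) c"
  shows "has_bochner_integral (PiM I (\<lambda>_. M)) (\<lambda>x. (\<Sum>i\<in>I. f (x i))\<^sup>2) (card I * c)"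
proof -
  interpret product_prob_space "\<lambda>_. M" I
    using product_prob_spaceI[of "\<lambda>_. M"] assms(1) by simp
  have cross: "has_bochner_integral (PiM I (\<lambda>_. M)) (\<lambda>x. f (x i) * f (x j))
      (if i = j then c else 0)" if "i \<in> I" "j \<in> I" for i j
  proof (cases "i = j")
    case True
    then show ?thesis
      using has_bochner_integral_PiM_component[OF assms(1) \<open>i \<in> I\<close> f2]
      by (simp add: power2_eq_square)
  next
    case False
    define g where "g k = (if k \<in> {i, j} then f else (\<lambda>_. 1))" for k
    have g: "integrable M (g k)" for k
      using f by (auto simp: g_def has_bochner_integral_iff)
    have prod_g: "(\<Prod>k\<in>I. g k (x k)) = f (x i) * f (x j)" for x
    proof -
      have "(\<Prod>k\<in>I. g k (x k)) = (\<Prod>k\<in>I. if k \<in> {i, j} then f (x k) else 1)"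
        by (intro prod.cong) (simp_all add: g_def)
      also have "\<dots> = (\<Prod>k\<in>I \<inter> {i, j}. f (x k))"
        using \<open>finite I\<close> by (rule prod.inter_restrict[symmetric])
      also have "I \<inter> {i, j} = {i, j}"
        using that by auto
      finally show ?thesis
        using False by simp
    qed
    have "(\<Prod>k\<in>I. integral\<^sup>L M (g k)) = 0"
      using f that \<open>finite I\<close> by (intro prod_zero) (auto simp: g_def has_bochner_integral_iff)
    then show ?thesis
      using product_integrable_prod[of I g] product_integral_prod[of I g] g \<open>finite I\<close> False
      by (simp add: has_bochner_integral_iff prod_g)
  qed
  have "has_bochner_integral (PiM I (\<lambda>_. M)) (\<lambda>x. \<Sum>i\<in>I. \<Sum>j\<in>I. f (x i) * f (x j))
          (\<Sum>i\<in>I. \<Sum>j\<in>I. if i = j then c else 0)"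
    using cross by (intro has_bochner_integral_sum) auto
  then show ?thesis
    using \<open>finite I\<close> by (simp add: power2_eq_square sum_product)
qed

lemma has_bochner_integral_mult_density:
  fixes L T :: "'a \<Rightarrow> real"
  assumes [measurable]: "L \<in> borel_measurable M" and "\<And>x. 0 \<le> L x"
    and T: "integrable (density M L) T"
  shows "has_bochner_integral M (\<lambda>x. L x * T x) (\<integral>x. T x \<partial>density M L)"
proof -
  have [measurable]: "T \<in> borel_measurable M"
    using borel_measurable_integrable[OF T] by simp
  show ?thesis
    using T assms(2) by (simp add: has_bochner_integral_iff integrable_density integral_density)
qed

section \<open>The Hammersley-Chapman-Robbins inequality\<close>

lemma hammersley_chapman_robbins:
  fixes L T :: "'a \<Rightarrow> real"
  assumes "prob_space M"
    and L: "has_bochner_integral M L 1"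
    and L2: "has_bochner_integral M (\<lambda>x. (L x)\<^sup>2) c" and "1 < c"
    and T: "has_bochner_integral M T \<mu>"
    and LT: "has_bochner_integral M (\<lambda>x. L x * T x) (\<mu> + \<Delta>)"
    and T2: "has_bochner_integral M (\<lambda>x. (T x - \<mu>)\<^sup>2) V"
  shows "\<Delta>\<^sup>2 / (c - 1) \<le> V"
proof -
  interpret prob_space M by fact
  have const: "has_bochner_integral M (\<lambda>_. a) a" for a :: real
    by (simp add: has_bochner_integral_iff prob_space)
  \<comment> \<open>\<open>k\<close> minimises the expansion of \<open>E (T - \<mu> - k (L - 1))\<^sup>2 \<ge> 0\<close>, whose cross term is
      \<open>Cov (T, L) = \<Delta>\<close>.\<close>
  define k where "k = \<Delta> / (c - 1)"
  have "has_bochner_integral M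
      (\<lambda>x. (T x - \<mu>)\<^sup>2 - 2 * k * (L x * T x - \<mu> * L x - T x + \<mu>) + k\<^sup>2 * ((L x)\<^sup>2 - 2 * L x + 1))
      (V - 2 * k * ((\<mu> + \<Delta>) - \<mu> * 1 - \<mu> + \<mu>) + k\<^sup>2 * (c - 2 * 1 + 1))"
    by (intro has_bochner_integral_add has_bochner_integral_diff has_bochner_integral_mult_right
        L L2 T LT T2 const)
  then have "has_bochner_integral M (\<lambda>x. (T x - \<mu> - k * (L x - 1))\<^sup>2)
      (V - 2 * k * \<Delta> + k\<^sup>2 * (c - 1))"
    by (rule has_bochner_integral_cong[THEN iffD1, rotated -1])
       (simp_all add: power2_eq_square algebra_simps)
  moreover have "0 \<le> (\<integral>x. (T x - \<mu> - k * (L x - 1))\<^sup>2 \<partial>M)"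
    by (rule integral_nonneg_AE) simp
  ultimately have "0 \<le> V - 2 * k * \<Delta> + k\<^sup>2 * (c - 1)"
    by (simp add: has_bochner_integral_integral_eq)
  also have "\<dots> = V - k * \<Delta>"
  proof -
    have "k * (c - 1) = \<Delta>"
      using \<open>1 < c\<close> by (simp add: k_def)
    then show ?thesis
      by (simp add: power2_eq_square algebra_simps flip: \<open>k * (c - 1) = \<Delta>\<close>)
  qed
  also have "\<dots> = V - \<Delta>\<^sup>2 / (c - 1)"
    by (simp add: k_def power2_eq_square)
  finally show ?thesis
    by simp
qed

lemma chapman_robbins_bound_limit:
  fixes v V :: real
  assumes "0 < v" "n \<ge> 1" and bound: "\<And>\<Delta>. 0 < \<Delta> \<Longrightarrow> \<Delta>\<^sup>2 / (exp (real n * \<Delta>\<^sup>2 / v) - 1) \<le> V"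
  shows "v / n \<le> V"
proof (rule tendsto_le[OF trivial_limit_at_right_real tendsto_const])
  have "0 < real n"
    using \<open>n \<ge> 1\<close> by simp
  then have "((\<lambda>\<Delta>. \<Delta>\<^sup>2 / (exp (real n * \<Delta>\<^sup>2 / v) - 1)) \<longlongrightarrow> inverse (real n) * v) (at_right 0)"
    using \<open>0 < v\<close> by real_asymp
  then show "((\<lambda>\<Delta>. \<Delta>\<^sup>2 / (exp (real n * \<Delta>\<^sup>2 / v) - 1)) \<longlongrightarrow> v / n) (at_right 0)"
    by (simp only: divide_inverse mult.commute)
  show "\<forall>\<^sub>F \<Delta> in at_right 0. \<Delta>\<^sup>2 / (exp (real n * \<Delta>\<^sup>2 / v) - 1) \<le> V"
    using eventually_at_right_less by (rule eventually_mono) (rule bound)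
qed

section \<open>The standard normal distribution\<close>

lemma prob_space_std_normal: "prob_space std_normal"
  unfolding std_normal_def by (rule prob_space_normal_density) simp

lemma sets_std_normal [measurable_cong, simp]: "sets std_normal = sets borel"
  unfolding std_normal_def by simp

lemma space_std_normal [simp]: "space std_normal = UNIV"
  unfolding std_normal_def by simp

lemma std_normal_moments:
  shows integrable_std_normal_power: "integrable std_normal (\<lambda>z. z ^ k)"
    and integral_std_normal_id: "(\<integral>z. z \<partial>std_normal) = 0"
    and integral_std_normal_square: "(\<integral>z. z\<^sup>2 \<partial>std_normal) = 1"
  unfolding std_normal_def
  using integrable_std_normal_distribution_moment integral_std_normal_distribution_moment_odd[of 1]
    std_normal_distribution_even_moments(1)[of 1]
  by simp_all

definition normal_lr :: "real \<Rightarrow> real \<Rightarrow> real" where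
  "normal_lr a z = exp (a * z - a\<^sup>2 / 2)"

lemma distr_std_normal_shift:
  "distr std_normal std_normal (\<lambda>z. z + a) = density std_normal (\<lambda>z. ennreal (normal_lr a z))"
proof -
  have shift: "std_normal_density z * normal_lr a z = std_normal_density (z - a)" for z
    by (simp add: std_normal_density_def normal_lr_def exp_add[symmetric] power2_eq_square
        algebra_simps)
  have "density std_normal (\<lambda>z. ennreal (normal_lr a z))
      = density lborel (\<lambda>z. ennreal (std_normal_density (z - a)))"
    unfolding std_normal_def
    by (subst density_density_eq)
       (auto simp: normal_lr_def shift[symmetric] ennreal_mult' normal_density_nonneg)
  also have "\<dots> = density (distr lborel borel ((+) a)) (\<lambda>z. ennreal (std_normal_density (z - a)))"
    by (simp add: lborel_distr_plus)
  also have "\<dots> = distr std_normal borel ((+) a)"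
    unfolding std_normal_def by (subst density_distr) simp_all
  also have "\<dots> = distr std_normal std_normal (\<lambda>z. z + a)"
    by (rule distr_cong) auto
  finally show ?thesis ..
qed

abbreviation std_normal3 :: "((real \<times> real) \<times> real) measure" where
  "std_normal3 \<equiv> (std_normal \<Otimes>\<^sub>M std_normal) \<Otimes>\<^sub>M std_normal"

lemma prob_space_std_normal3: "prob_space std_normal3"
  by (intro prob_space_pair prob_space_std_normal)

lemma distr_std_normal3_shift:
  "distr std_normal3 std_normal3 (\<lambda>((z1, z2), z3). ((z1, z2 + a), z3 + b))
     = density std_normal3 (\<lambda>((z1, z2), z3). ennreal (normal_lr a z2 * normal_lr b z3))"
proof -
  have [measurable]: "normal_lr c \<in> borel_measurable borel" for c
    unfolding normal_lr_def by measurable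
  have inner: "distr (std_normal \<Otimes>\<^sub>M std_normal) (std_normal \<Otimes>\<^sub>M std_normal) (\<lambda>(x, y). (x, y + a))
      = density (std_normal \<Otimes>\<^sub>M std_normal) (\<lambda>(x, y). ennreal (normal_lr a y))"
    using distr_pair_measure_eq_density[of std_normal std_normal "\<lambda>x. x" "\<lambda>z. z + a" "\<lambda>_. 1"
        "\<lambda>z. ennreal (normal_lr a z)"]
    by (simp add: prob_space_std_normal distr_std_normal_shift density_1)
  show ?thesis
    using distr_pair_measure_eq_density[of "std_normal \<Otimes>\<^sub>M std_normal" std_normal
        "\<lambda>(x, y). (x, y + a)" "\<lambda>z. z + b" "\<lambda>(x, y). ennreal (normal_lr a y)"
        "\<lambda>z. ennreal (normal_lr b z)"] inner
    by (simp add: prob_space_pair prob_space_std_normal distr_std_normal_shift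
        case_prod_beta' ennreal_mult' normal_lr_def)
qed

lemma std_normal3_moments:
  fixes s t :: real
  defines "r \<equiv> \<lambda>((z1, z2), z3). s * z2 + t * z3"
  shows "has_bochner_integral std_normal3 r 0"
    and "has_bochner_integral std_normal3 (\<lambda>z. (r z)\<^sup>2) (s\<^sup>2 + t\<^sup>2)"
proof -
  note N = prob_space_std_normal and N2 = prob_space_pair[OF N N]
  have N1: "measure std_normal UNIV = 1" "integrable std_normal (\<lambda>_. 1::real)"
    using prob_space.prob_space[OF N] integrable_std_normal_power[of 0] by simp_all
  have snd_power: "has_bochner_integral (std_normal \<Otimes>\<^sub>M std_normal) (\<lambda>z. (snd z) ^ k)
      (\<integral>z. z ^ k \<partial>std_normal)" for k
    using has_bochner_integral_pair_measure_mult[OF N N, of "\<lambda>_. 1" "\<lambda>z. z ^ k"]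
    by (simp add: integrable_std_normal_power N1)
  have "has_bochner_integral std_normal3 (\<lambda>z. (snd (fst z)) ^ k * (snd z) ^ l)
      ((\<integral>z. z ^ k \<partial>std_normal) * (\<integral>z. z ^ l \<partial>std_normal))" for k l
    using has_bochner_integral_pair_measure_mult[OF N2 N, of "\<lambda>z. (snd z) ^ k" "\<lambda>z. z ^ l"]
      snd_power[of k]
    by (simp add: has_bochner_integral_iff integrable_std_normal_power)
  from this[of 1 0] this[of 0 1] this[of 2 0] this[of 1 1] this[of 0 2]
  have "has_bochner_integral std_normal3 (\<lambda>z. snd (fst z)) 0"
    "has_bochner_integral std_normal3 (\<lambda>z. snd z) 0"
    "has_bochner_integral std_normal3 (\<lambda>z. (snd (fst z))\<^sup>2) 1"
    "has_bochner_integral std_normal3 (\<lambda>z. snd (fst z) * snd z) 0"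
    "has_bochner_integral std_normal3 (\<lambda>z. (snd z)\<^sup>2) 1"
    by (simp_all add: integral_std_normal_id integral_std_normal_square N1)
  note moments = this
  have r: "r z = s * snd (fst z) + t * snd z" for z
    unfolding r_def by (simp add: case_prod_beta)
  have "has_bochner_integral std_normal3 (\<lambda>z. s * snd (fst z) + t * snd z) (s * 0 + t * 0)"
    by (intro has_bochner_integral_add has_bochner_integral_mult_right moments)
  then show "has_bochner_integral std_normal3 r 0"
    by (simp add: r[abs_def])
  have "has_bochner_integral std_normal3
      (\<lambda>z. s\<^sup>2 * (snd (fst z))\<^sup>2 + (2 * s * t) * (snd (fst z) * snd z) + t\<^sup>2 * (snd z)\<^sup>2)
      (s\<^sup>2 * 1 + (2 * s * t) * 0 + t\<^sup>2 * 1)"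
    by (intro has_bochner_integral_add has_bochner_integral_mult_right moments)
  then show "has_bochner_integral std_normal3 (\<lambda>z. (r z)\<^sup>2) (s\<^sup>2 + t\<^sup>2)"
    by (rule has_bochner_integral_cong[THEN iffD1, rotated -1])
       (simp_all add: r power2_eq_square algebra_simps)
qed

section \<open>The observation model\<close>

definition obs_map :: "real \<Rightarrow> real \<Rightarrow> real \<Rightarrow> real \<Rightarrow> (real \<times> real) \<times> real \<Rightarrow> real \<times> real" where
  "obs_map sf sa \<alpha> \<mu> = (\<lambda>((z1, z2), z3). (\<mu> + \<alpha> * z1 + sqrt (sf\<^sup>2 - \<alpha>\<^sup>2) * z2 + sa * z3, z1))"

lemma measurable_obs_map [measurable]: "obs_map sf sa \<alpha> \<mu> \<in> borel_measurable std_normal3"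
  unfolding obs_map_def split_beta' borel_prod[symmetric] by measurable

lemma obs_law_eq_distr: "obs_law sf sa \<alpha> \<mu> = distr std_normal3 borel (obs_map sf sa \<alpha> \<mu>)"
  unfolding obs_law_def obs_map_def ..

lemma prob_space_obs_law: "prob_space (obs_law sf sa \<alpha> \<mu>)"
  unfolding obs_law_eq_distr
  by (rule prob_space.prob_space_distr[OF prob_space_std_normal3]) simp

lemma sets_obs_law [measurable_cong, simp]: "sets (obs_law sf sa \<alpha> \<mu>) = sets borel"
  by (simp add: obs_law_eq_distr)

definition cv_residual :: "real \<Rightarrow> real \<Rightarrow> real \<times> real \<Rightarrow> real" where
  "cv_residual \<alpha> \<mu> p = fst p - \<alpha> * snd p - \<mu>"

lemma measurable_cv_residual [measurable]: "cv_residual \<alpha> \<mu> \<in> borel_measurable borel"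
  unfolding cv_residual_def borel_prod[symmetric] by measurable

lemma cv_residual_obs_map:
  "cv_residual \<alpha> \<mu> (obs_map sf sa \<alpha> \<mu> ((z1, z2), z3)) = sqrt (sf\<^sup>2 - \<alpha>\<^sup>2) * z2 + sa * z3"
  by (simp add: cv_residual_def obs_map_def)

lemma cv_residual_moments:
  shows has_bochner_integral_cv_residual:
      "has_bochner_integral (obs_law sf sa \<alpha> \<mu>) (cv_residual \<alpha> \<mu>) 0"
    and has_bochner_integral_cv_residual_square: "\<bar>\<alpha>\<bar> \<le> sf \<Longrightarrow>
      has_bochner_integral (obs_law sf sa \<alpha> \<mu>) (\<lambda>p. (cv_residual \<alpha> \<mu> p)\<^sup>2) (sf\<^sup>2 - \<alpha>\<^sup>2 + sa\<^sup>2)"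
proof -
  note moments = std_normal3_moments[of "sqrt (sf\<^sup>2 - \<alpha>\<^sup>2)" sa]
  have eq: "(\<lambda>((z1, z2), z3). sqrt (sf\<^sup>2 - \<alpha>\<^sup>2) * z2 + sa * z3)
      = (\<lambda>z. cv_residual \<alpha> \<mu> (obs_map sf sa \<alpha> \<mu> z))"
    by (auto simp: cv_residual_obs_map)
  show "has_bochner_integral (obs_law sf sa \<alpha> \<mu>) (cv_residual \<alpha> \<mu>) 0"
    unfolding obs_law_eq_distr using moments(1)
    by (intro has_bochner_integral_distr) (simp_all add: eq)
  assume "\<bar>\<alpha>\<bar> \<le> sf"
  then have "\<alpha>\<^sup>2 \<le> sf\<^sup>2"
    by (metis abs_le_square_iff abs_of_nonneg abs_ge_zero order_trans)
  then show "has_bochner_integral (obs_law sf sa \<alpha> \<mu>) (\<lambda>p. (cv_residual \<alpha> \<mu> p)\<^sup>2)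
      (sf\<^sup>2 - \<alpha>\<^sup>2 + sa\<^sup>2)"
    unfolding obs_law_eq_distr using moments(2)
    by (intro has_bochner_integral_distr) (simp_all add: eq)
qed

definition obs_lr :: "real \<Rightarrow> real \<Rightarrow> real \<Rightarrow> real \<Rightarrow> real \<times> real \<Rightarrow> real" where
  "obs_lr v \<alpha> \<mu> \<Delta> p = exp (\<Delta> * cv_residual \<alpha> \<mu> p / v - \<Delta>\<^sup>2 / (2 * v))"

lemma measurable_obs_lr [measurable]: "obs_lr v \<alpha> \<mu> \<Delta> \<in> borel_measurable borel"
  unfolding obs_lr_def by measurable

lemma obs_law_shift:
  assumes "\<bar>\<alpha>\<bar> \<le> sf" and v: "v = sf\<^sup>2 - \<alpha>\<^sup>2 + sa\<^sup>2" "0 < v"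
  shows "obs_law sf sa \<alpha> (\<mu> + \<Delta>) = density (obs_law sf sa \<alpha> \<mu>) (\<lambda>p. ennreal (obs_lr v \<alpha> \<mu> \<Delta> p))"
proof -
  define s where "s = sqrt (sf\<^sup>2 - \<alpha>\<^sup>2)"
  have "\<alpha>\<^sup>2 \<le> sf\<^sup>2"
    using assms(1) by (metis abs_le_square_iff abs_of_nonneg abs_ge_zero order_trans)
  then have v_eq: "s * s + sa * sa = v"
    unfolding s_def v by (simp add: power2_eq_square[symmetric])
  \<comment> \<open>Shifting the noise coordinates \<open>z2, z3\<close> by \<open>(a, b)\<close> moves the residual by
      \<open>s a + sa b = \<Delta>\<close>, and the Gaussian shift formula supplies the likelihood ratio.\<close>
  define a b where "a = \<Delta> * s / v" and "b = \<Delta> * sa / v"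
  have "s * a + sa * b = \<Delta> * (s * s + sa * sa) / v"
    unfolding a_def b_def by (simp add: add_divide_distrib algebra_simps)
  then have ab: "s * a + sa * b = \<Delta>"
    using v(2) by (simp add: v_eq)
  have "a\<^sup>2 + b\<^sup>2 = \<Delta>\<^sup>2 * (s * s + sa * sa) / v\<^sup>2"
    using v(2) by (simp add: a_def b_def field_simps power2_eq_square)
  then have ab2: "a\<^sup>2 + b\<^sup>2 = \<Delta>\<^sup>2 / v"
    using v(2) by (simp add: v_eq power2_eq_square)
  let ?shift = "\<lambda>((z1, z2), z3). ((z1, z2 + a), z3 + b)"
  have [measurable]: "?shift \<in> std_normal3 \<rightarrow>\<^sub>M std_normal3"
    unfolding split_beta' by measurable
  have lr: "obs_lr v \<alpha> \<mu> \<Delta> (obs_map sf sa \<alpha> \<mu> ((z1, z2), z3)) = normal_lr a z2 * normal_lr b z3"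
    for z1 z2 z3
  proof -
    have "a * z2 + b * z3 = \<Delta> * (s * z2 + sa * z3) / v"
      unfolding a_def b_def by (simp add: add_divide_distrib algebra_simps)
    then have "(a * z2 - a\<^sup>2 / 2) + (b * z3 - b\<^sup>2 / 2) = \<Delta> * (s * z2 + sa * z3) / v - \<Delta>\<^sup>2 / (2 * v)"
      using ab2 by (simp add: algebra_simps)
    then show ?thesis
      by (simp add: obs_lr_def normal_lr_def cv_residual_obs_map s_def[symmetric]
          exp_add[symmetric])
  qed
  have "obs_law sf sa \<alpha> (\<mu> + \<Delta>) = distr std_normal3 borel (\<lambda>z. obs_map sf sa \<alpha> \<mu> (?shift z))"
    unfolding obs_law_eq_distr
    by (rule distr_cong) (auto simp: obs_map_def s_def[symmetric] ab[symmetric] algebra_simps)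
  also have "\<dots> = distr (distr std_normal3 std_normal3 ?shift) borel (obs_map sf sa \<alpha> \<mu>)"
    by (subst distr_distr) (simp_all add: comp_def)
  also have "\<dots> = distr (density std_normal3 (\<lambda>z. ennreal (obs_lr v \<alpha> \<mu> \<Delta> (obs_map sf sa \<alpha> \<mu> z))))
                     borel (obs_map sf sa \<alpha> \<mu>)"
    unfolding distr_std_normal3_shift by (rule arg_cong2[where f="\<lambda>M f. distr M borel f"])
      (auto intro!: arg_cong[where f="density std_normal3"] simp: lr split: prod.splits)
  also have "\<dots> = density (obs_law sf sa \<alpha> \<mu>) (\<lambda>p. ennreal (obs_lr v \<alpha> \<mu> \<Delta> p))"
    unfolding obs_law_eq_distr by (rule density_distr[symmetric]) simp_all
  finally show ?thesis .
qed

section \<open>Samples of n observations\<close>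

lemma prob_space_sample_law: "prob_space (sample_law n sf sa \<alpha> \<mu>)"
  unfolding sample_law_def by (intro prob_space_PiM prob_space_obs_law)

lemma sets_sample_law: "sets (sample_law n sf sa \<alpha> \<mu>) = sets (PiM {..<n} (\<lambda>_. borel))"
  unfolding sample_law_def by (rule sets_PiM_cong) simp_all

lemma mu_cv_eq_residual_mean:
  assumes "n \<ge> 1"
  shows "mu_cv n \<alpha> = (\<lambda>x. \<mu> + (\<Sum>i<n. cv_residual \<alpha> \<mu> (x i)) / n)"
proof
  fix x
  have "(\<Sum>i<n. cv_residual \<alpha> \<mu> (x i)) = (\<Sum>i<n. fst (x i) - \<alpha> * snd (x i)) - n * \<mu>"
    by (simp add: cv_residual_def sum_subtractf)
  then show "mu_cv n \<alpha> x = \<mu> + (\<Sum>i<n. cv_residual \<alpha> \<mu> (x i)) / n"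
    using assms by (simp add: mu_cv_def field_simps)
qed

lemma unbiased_mu_cv:
  assumes "n \<ge> 1"
  shows "unbiased n sf sa \<alpha> (mu_cv n \<alpha>)"
  unfolding unbiased_def
proof (intro conjI allI)
  show "mu_cv n \<alpha> \<in> borel_measurable (PiM {..<n} (\<lambda>_. borel))"
    unfolding mu_cv_def borel_prod[symmetric] by measurable
  fix \<mu>
  interpret prob_space "sample_law n sf sa \<alpha> \<mu>"
    by (rule prob_space_sample_law)
  have "has_bochner_integral (sample_law n sf sa \<alpha> \<mu>) (\<lambda>x. \<Sum>i<n. cv_residual \<alpha> \<mu> (x i)) (\<Sum>i<n. 0)"
    unfolding sample_law_def
    by (intro has_bochner_integral_sum has_bochner_integral_PiM_component prob_space_obs_law
        has_bochner_integral_cv_residual) simp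
  then have "has_bochner_integral (sample_law n sf sa \<alpha> \<mu>)
      (\<lambda>x. \<mu> + (\<Sum>i<n. cv_residual \<alpha> \<mu> (x i)) / n) (\<mu> + 0 / n)"
    by (intro has_bochner_integral_add has_bochner_integral_divide_zero)
       (simp_all add: has_bochner_integral_iff prob_space)
  then show "integrable (sample_law n sf sa \<alpha> \<mu>) (mu_cv n \<alpha>)"
      "(\<integral>x. mu_cv n \<alpha> x \<partial>sample_law n sf sa \<alpha> \<mu>) = \<mu>"
    by (simp_all add: mu_cv_eq_residual_mean[OF assms, where \<mu> = \<mu>] has_bochner_integral_iff)
qed

lemma mse_mu_cv:
  assumes "\<bar>\<alpha>\<bar> \<le> sf" "n \<ge> 1"
  shows "mse n sf sa \<alpha> \<mu> (mu_cv n \<alpha>) = ennreal ((sf\<^sup>2 - \<alpha>\<^sup>2 + sa\<^sup>2) / n)"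
proof -
  have "has_bochner_integral (sample_law n sf sa \<alpha> \<mu>) (\<lambda>x. (\<Sum>i<n. cv_residual \<alpha> \<mu> (x i))\<^sup>2)
          (card {..<n} * (sf\<^sup>2 - \<alpha>\<^sup>2 + sa\<^sup>2))"
    unfolding sample_law_def
    by (intro has_bochner_integral_PiM_sum_square prob_space_obs_law finite_lessThan
        has_bochner_integral_cv_residual has_bochner_integral_cv_residual_square assms(1))
  then have "has_bochner_integral (sample_law n sf sa \<alpha> \<mu>)
          (\<lambda>x. (\<Sum>i<n. cv_residual \<alpha> \<mu> (x i))\<^sup>2 / n\<^sup>2) (n * (sf\<^sup>2 - \<alpha>\<^sup>2 + sa\<^sup>2) / n\<^sup>2)"
    by (intro has_bochner_integral_divide_zero) simp
  then have "has_bochner_integral (sample_law n sf sa \<alpha> \<mu>) (\<lambda>x. (mu_cv n \<alpha> x - \<mu>)\<^sup>2)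
          (n * (sf\<^sup>2 - \<alpha>\<^sup>2 + sa\<^sup>2) / n\<^sup>2)"
    by (simp add: mu_cv_eq_residual_mean[OF assms(2), where \<mu> = \<mu>] power_divide)
  then show ?thesis
    using assms(2) unfolding mse_def
    by (subst nn_integral_eq_integral) (auto simp: has_bochner_integral_iff power2_eq_square)
qed

definition sample_lr :: "nat \<Rightarrow> real \<Rightarrow> real \<Rightarrow> real \<Rightarrow> real \<Rightarrow> (nat \<Rightarrow> real \<times> real) \<Rightarrow> real" where
  "sample_lr n v \<alpha> \<mu> \<Delta> x = (\<Prod>i<n. obs_lr v \<alpha> \<mu> \<Delta> (x i))"

lemma measurable_sample_lr [measurable]:
  "sample_lr n v \<alpha> \<mu>' \<Delta> \<in> borel_measurable (sample_law n sf sa \<alpha> \<mu>)"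
  unfolding sample_lr_def measurable_cong_sets[OF sets_sample_law refl] by measurable

lemma sample_lr_nonneg: "0 \<le> sample_lr n v \<alpha> \<mu> \<Delta> x"
  unfolding sample_lr_def obs_lr_def by (simp add: prod_nonneg)

lemma sample_lr_square:
  assumes "v \<noteq> 0"
  shows "(sample_lr n v \<alpha> \<mu> \<Delta> x)\<^sup>2 = exp (real n * \<Delta>\<^sup>2 / v) * sample_lr n v \<alpha> \<mu> (2 * \<Delta>) x"
proof -
  have "(obs_lr v \<alpha> \<mu> \<Delta> p)\<^sup>2 = exp (\<Delta>\<^sup>2 / v) * obs_lr v \<alpha> \<mu> (2 * \<Delta>) p" for p
    using assms
    by (simp add: obs_lr_def exp_add[symmetric] power2_eq_square exp_double[symmetric] field_simps)
  then show ?thesis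
    by (simp add: sample_lr_def prod_power_distrib prod.distrib exp_of_nat_mult[symmetric])
qed

lemma sample_law_shift:
  assumes "\<bar>\<alpha>\<bar> \<le> sf" and "v = sf\<^sup>2 - \<alpha>\<^sup>2 + sa\<^sup>2" "0 < v"
  shows "sample_law n sf sa \<alpha> (\<mu> + \<Delta>)
           = density (sample_law n sf sa \<alpha> \<mu>) (\<lambda>x. ennreal (sample_lr n v \<alpha> \<mu> \<Delta> x))"
proof -
  have "sample_law n sf sa \<alpha> (\<mu> + \<Delta>)
      = PiM {..<n} (\<lambda>_. density (obs_law sf sa \<alpha> \<mu>) (\<lambda>p. ennreal (obs_lr v \<alpha> \<mu> \<Delta> p)))"
    unfolding sample_law_def obs_law_shift[OF assms] ..
  also have "\<dots> = density (sample_law n sf sa \<alpha> \<mu>) (\<lambda>x. \<Prod>i<n. ennreal (obs_lr v \<alpha> \<mu> \<Delta> (x i)))"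
    unfolding sample_law_def
    by (rule PiM_density) (simp_all add: prob_space_obs_law obs_law_shift[OF assms, symmetric])
  finally show ?thesis
    by (simp add: sample_lr_def prod_ennreal obs_lr_def)
qed

lemma sample_chapman_robbins_bound:
  assumes "\<bar>\<alpha>\<bar> \<le> sf" and v: "v = sf\<^sup>2 - \<alpha>\<^sup>2 + sa\<^sup>2" "0 < v" and "n \<ge> 1" "\<Delta> \<noteq> 0"
    and T: "unbiased n sf sa \<alpha> T"
    and T2: "has_bochner_integral (sample_law n sf sa \<alpha> \<mu>) (\<lambda>x. (T x - \<mu>)\<^sup>2) V"
  shows "\<Delta>\<^sup>2 / (exp (real n * \<Delta>\<^sup>2 / v) - 1) \<le> V"
proof -
  let ?P = "sample_law n sf sa \<alpha> \<mu>" and ?L = "sample_lr n v \<alpha> \<mu>"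
  have law: "sample_law n sf sa \<alpha> (\<mu> + d) = density ?P (\<lambda>x. ennreal (?L d x))" for d
    by (rule sample_law_shift[OF assms(1) v])
  have LT: "has_bochner_integral ?P (\<lambda>x. ?L d x * T x) (\<mu> + d)" for d
    using has_bochner_integral_mult_density[of "?L d" ?P T] T
    by (simp add: sample_lr_nonneg unbiased_def flip: law)
  have L: "has_bochner_integral ?P (?L d) 1" for d
  proof -
    interpret prob_space "sample_law n sf sa \<alpha> (\<mu> + d)"
      by (rule prob_space_sample_law)
    show ?thesis
      using has_bochner_integral_mult_density[of "?L d" ?P "\<lambda>_. 1"] prob_space
      by (simp add: sample_lr_nonneg flip: law)
  qed
  have "has_bochner_integral ?P (\<lambda>x. exp (real n * \<Delta>\<^sup>2 / v) * ?L (2 * \<Delta>) x)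
      (exp (real n * \<Delta>\<^sup>2 / v) * 1)"
    by (intro has_bochner_integral_mult_right L)
  then have L2: "has_bochner_integral ?P (\<lambda>x. (?L \<Delta> x)\<^sup>2) (exp (real n * \<Delta>\<^sup>2 / v))"
    using v(2) by (simp add: sample_lr_square)
  have "1 < exp (real n * \<Delta>\<^sup>2 / v)"
    using assms(4,5) v(2) by simp
  moreover have "has_bochner_integral ?P T \<mu>"
    using T by (simp add: unbiased_def has_bochner_integral_iff)
  ultimately show ?thesis
    by (rule hammersley_chapman_robbins[OF prob_space_sample_law L L2 _ _ LT T2])
qed

lemma mse_unbiased_lower_bound:
  assumes "\<bar>\<alpha>\<bar> \<le> sf" "n \<ge> 1" and T: "unbiased n sf sa \<alpha> T"
  shows "ennreal ((sf\<^sup>2 - \<alpha>\<^sup>2 + sa\<^sup>2) / n) \<le> mse n sf sa \<alpha> \<mu> T"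
proof (cases "0 < sf\<^sup>2 - \<alpha>\<^sup>2 + sa\<^sup>2 \<and> mse n sf sa \<alpha> \<mu> T \<noteq> \<infinity>")
  case True
  define v where "v = sf\<^sup>2 - \<alpha>\<^sup>2 + sa\<^sup>2"
  let ?P = "sample_law n sf sa \<alpha> \<mu>"
  have [measurable]: "T \<in> borel_measurable ?P"
    using T by (simp add: unbiased_def measurable_cong_sets[OF sets_sample_law refl])
  have "integrable ?P (\<lambda>x. (T x - \<mu>)\<^sup>2)"
    using True unfolding mse_def by (simp add: integrable_iff_bounded less_top)
  then have T2: "has_bochner_integral ?P (\<lambda>x. (T x - \<mu>)\<^sup>2) (\<integral>x. (T x - \<mu>)\<^sup>2 \<partial>?P)"
    and mse: "mse n sf sa \<alpha> \<mu> T = ennreal (\<integral>x. (T x - \<mu>)\<^sup>2 \<partial>?P)"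
    unfolding mse_def by (simp_all add: has_bochner_integral_iff nn_integral_eq_integral)
  have "v / n \<le> (\<integral>x. (T x - \<mu>)\<^sup>2 \<partial>?P)"
  proof (rule chapman_robbins_bound_limit)
    show "0 < v"
      using True by (simp add: v_def)
    then show "\<Delta>\<^sup>2 / (exp (real n * \<Delta>\<^sup>2 / v) - 1) \<le> (\<integral>x. (T x - \<mu>)\<^sup>2 \<partial>?P)" if "0 < \<Delta>" for \<Delta>
      using that by (intro sample_chapman_robbins_bound[OF assms(1) v_def _ assms(2) _ T T2]) auto
  qed fact
  then show ?thesis
    by (simp add: mse v_def ennreal_leI)
next
  case False
  then show ?thesis
    by (auto simp: ennreal_neg divide_nonpos_nonneg)
qed

theorem lemma2:
  fixes sf sa \<alpha> :: real and n :: nat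
  assumes "sf > 0" and "sa \<ge> 0" and "\<bar>\<alpha>\<bar> \<le> sf" and "n \<ge> 1"
  shows "unbiased n sf sa \<alpha> (mu_cv n \<alpha>) \<and>
         (\<forall>T. unbiased n sf sa \<alpha> T \<longrightarrow>
              (\<forall>\<mu>. mse n sf sa \<alpha> \<mu> (mu_cv n \<alpha>) \<le> mse n sf sa \<alpha> \<mu> T))"
proof (intro conjI allI impI)
  show "unbiased n sf sa \<alpha> (mu_cv n \<alpha>)"
    by (rule unbiased_mu_cv[OF assms(4)])
  fix T \<mu>
  assume "unbiased n sf sa \<alpha> T"
  then show "mse n sf sa \<alpha> \<mu> (mu_cv n \<alpha>) \<le> mse n sf sa \<alpha> \<mu> T"
    unfolding mse_mu_cv[OF assms(3,4)] by (rule mse_unbiased_lower_bound[OF assms(3,4)])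
qed

end
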